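(* Let $k\ge1$ and $\tilde d=(d_1,\dots,d_k)$ with integers $d_i\ge2$. Consider the cone percolation process with radius of influence $R$ on the rooted $k$-periodic tree $\mathbb{T}^+_{\tilde d}$, with law $\mathbb{P}_+$ and survival event $V$. Let $\rho$ be the smallest non-negative root of $$\sum_{i=0}^{k-1}\mathbb{E}\big(\rho^{c_iG^R}I_i(R)\big)+(1-\rho)p_0=\rho,$$ and $\psi$ the smallest non-negative root of $$\sum_{i=0}^{k-1}\mathbb{E}\big(\psi^{\lfloor \bar c_i h_i(R)\rfloor}I_i(R)\big)=\psi.$$ Then $1-\rho\le \mathbb{P}_+(V)\le 1-\psi$.
   Context: Cone percolation process: Let $\mathbb{T}$ be a tree with origin $\mathcal{O}$ and graph distance $d(\cdot,\cdot)$. Write $u\le v$ if $u$ lies on the path from $\mathcal{O}$ to $v$. Let $R$ be a random variable with values in $\{0,1,2,\dots\}$, $p_k=\mathbb{P}(R=k)$, and assume $p_0\in(0,1)$. Let $\{R_v\}$ be i.i.d. copies of $R$ indexed by the vertices. For each vertex $u$ let $B_u=\{v: u\le v,\ d(u,v)\le R_u\}$. Set $I_0=\{\mathcal{O}\}$, $I_{n+1}=\bigcup_{u\in I_n}B_u$, $I=\bigcup_n I_n$; survival is the event $V=\{|I|=\infty\}$. Periodic trees: the $k$-periodic tree $\mathbb{T}_{\tilde d}$ is the tree with origin $\mathcal{O}$ in which every vertex at distance $nk+i-1$ from $\mathcal{O}$ ($n\ge0$, $i\in\{1,\dots,k\}$) has degree $d_i+1$; $\mathbb{T}^+_{\tilde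 d}$ is obtained by choosing a neighbour $u$ of $\mathcal{O}$ and deleting all vertices $w$ with $u\le w$. Notation: $d_{(1)}\le\dots\le d_{(k)}$ are the entries of $\tilde d$ in increasing order; $G=(\prod_{j=1}^k d_j)^{1/k}$; $c_0=\bar c_0=1$, and for $i=1,\dots,k-1$, $c_i=\prod_{j=1}^i d_{(j)}/G^i$, $\bar c_i=\prod_{j=k+1-i}^k d_{(j)}/G^i$. For $i=0,\dots,k-1$, $I_i(R)=1$ if $R=nk+i$ for some integer $n\ge0$ and $0$ otherwise. Let $\underline{x}_{n,0}=(\prod_{j=1}^k d_j)^n$ and $\underline{x}_{n,i}=(\prod_{j=1}^k d_j)^n\prod_{j=1}^i d_{(j)}$ for $i\ge1$. For $R\equiv i\pmod k$, with $N=(R-i)/k$, $$h_i(R)=\Big[\sum_{m=0}^{N-1}\sum_{j=0}^{k-1}(\underline{x}_{m,j})^{-1}+\sum_{j=0}^{i-1}(\underline{x}_{N,j})^{-1}\Big]G^R$$ (only used when $I_i(R)=1$). *)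

theory Defs
  imports "HOL-Probability.Probability" "HOL-Library.Sublist"
begin

text \<open>The k-periodic tree is given by the list d = [d_1,...,d_k].
  Vertices of the rooted tree T^+_d are finite lists of child indices; the root
  is the empty list. A vertex at depth m (= length of the list) has
  d_{(m mod k)+1} = d ! (m mod k) children. The ancestor order u \<le> v is the
  prefix order and d(u,v) = length v - length u when u is a prefix of v.\<close>

definition ptree :: "nat list \<Rightarrow> nat list set" where
  "ptree d = {vs. \<forall>j<length vs. vs ! j < d ! (j mod length d)}"

definition cone_B :: "nat list \<Rightarrow> (nat list \<Rightarrow> nat) \<Rightarrow> nat list \<Rightarrow> nat list set" where
  "cone_B d Rv u = {v \<in> ptree d. prefix u v \<and> length v - length u \<le> Rv u}"

primrec cone_I :: "nat list \<Rightarrow> (nat list \<Rightarrow> nat) \<Rightarrow> nat \<Rightarrow> nat list set" where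
  "cone_I d Rv 0 = {[]}"
| "cone_I d Rv (Suc n) = (\<Union>u\<in>cone_I d Rv n. cone_B d Rv u)"

definition cone_set :: "nat list \<Rightarrow> (nat list \<Rightarrow> nat) \<Rightarrow> nat list set" where
  "cone_set d Rv = (\<Union>n. cone_I d Rv n)"

text \<open>Constants. dsort d j = d_(j), 1-indexed order statistics.\<close>
definition dsort :: "nat list \<Rightarrow> nat \<Rightarrow> nat" where
  "dsort d j = sort d ! (j - 1)"

definition Gm :: "nat list \<Rightarrow> real" where
  "Gm d = root (length d) (real (prod_list d))"

definition cc :: "nat list \<Rightarrow> nat \<Rightarrow> real" where
  "cc d i = (\<Prod>j=1..i. real (dsort d j)) / Gm d ^ i"

definition cbar :: "nat list \<Rightarrow> nat \<Rightarrow> real" where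
  "cbar d i = (\<Prod>j=length d + 1 - i..length d. real (dsort d j)) / Gm d ^ i"

definition xx :: "nat list \<Rightarrow> nat \<Rightarrow> nat \<Rightarrow> real" where
  "xx d n i = real (prod_list d) ^ n * (\<Prod>j=1..i. real (dsort d j))"

definition hh :: "nat list \<Rightarrow> nat \<Rightarrow> nat \<Rightarrow> real" where
  "hh d i r = (let N = (r - i) div length d in
     ((\<Sum>m<N. \<Sum>j<length d. 1 / xx d m j) + (\<Sum>j<i. 1 / xx d N j)) * Gm d ^ r)"

definition indI :: "nat list \<Rightarrow> nat \<Rightarrow> nat \<Rightarrow> real" where
  "indI d i r = (if r mod length d = i then 1 else 0)"

end

theory Submission
  imports Defs
begin

text \<open>The cone is finite exactly when it dies out after finitely many fresh starts, a fresh
  start being a vertex whose own radius exceeds the budget it inherits from the cones above it.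
  The events that at most N fresh starts occur along every path increase to finiteness.
  Conditioning on the radius at a vertex, and using that the subtrees of its children carry
  independent radii, gives a recursion for their probabilities. A vertex has between
  c_i G^r and cbar_i G^r descendants at distance r (i = r mod k), since r consecutive levels
  contain full periods of d and, for the remainder, i degrees which are at least the i smallest
  and at most the i largest entries of d. Inserting the lower count, an induction bounds the
  extinction probability by \<rho>. Inserting the upper count, a vertex starting afresh with radius
  R reaches at most cbar_i h_i(R) further vertices, so the probabilities dominate the iterates of
  x \<mapsto> E x^{\<lfloor>cbar_i h_i(R)\<rfloor>} from 0, whose limit is a fixed point and hence at least \<psi>.\<close>

section \<open>Order statistics of products\<close>

lemma sorted_nth_le_of_length_filter:
  fixes L :: "nat list"
  assumes "sorted L" "m < length L" "Suc m \<le> length (filter (\<lambda>x. x \<le> y) L)"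
  shows "L ! m \<le> y"
proof (rule ccontr)
  assume "\<not> L ! m \<le> y"
  hence big: "\<forall>p. m \<le> p \<and> p < length L \<longrightarrow> \<not> L ! p \<le> y"
    using assms(1) by (meson dual_order.trans sorted_nth_mono)
  have "length (filter (\<lambda>x. x \<le> y) L) = card {p. p < length L \<and> L ! p \<le> y}"
    by (rule length_filter_conv_card)
  also have "\<dots> \<le> card {..<m}"
    by (rule card_mono) (auto, metis big leI)
  finally show False using assms(3) by simp
qed

lemma sort_nth_le_sort_nth_subset_mset:
  fixes A B :: "nat list"
  assumes sub: "mset A \<subseteq># mset B" and m: "m < length A"
  shows "sort B ! m \<le> sort A ! m"
proof -
  let ?y = "sort A ! m"
  have "card {..m} \<le> card {p. p < length A \<and> sort A ! p \<le> ?y}"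
    by (rule card_mono) (use m in \<open>auto intro: sorted_nth_mono\<close>)
  also have "\<dots> = length (filter (\<lambda>x. x \<le> ?y) (sort A))"
    by (simp add: length_filter_conv_card)
  also have "\<dots> \<le> length (filter (\<lambda>x. x \<le> ?y) (sort B))"
    using size_mset_mono[OF multiset_filter_mono[OF sub, of "\<lambda>x. x \<le> ?y"]]
    by (metis mset_filter mset_sort size_mset)
  finally have "Suc m \<le> length (filter (\<lambda>x. x \<le> ?y) (sort B))" by simp
  moreover have "m < length (sort B)"
    using m size_mset_mono[OF sub] by simp
  ultimately show ?thesis by (intro sorted_nth_le_of_length_filter) simp_all
qed

lemma prod_list_sort: "prod_list (sort xs) = prod_list (xs :: nat list)"
  by (metis mset_sort prod_mset_prod_list)

lemma prod_lessThan_sort_nth: "(\<Prod>j<length xs. sort xs ! j) = prod_list (xs :: nat list)"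
proof -
  have "(\<Prod>j<length xs. sort xs ! j) = prod_list (sort xs)"
    by (simp add: prod.list_conv_set_nth atLeast0LessThan)
  then show ?thesis by (simp only: prod_list_sort)
qed

lemma prod_sort_prefix_le_prod_subset:
  fixes d :: "nat list"
  assumes S: "S \<subseteq> {..<length d}"
  shows "(\<Prod>j<card S. sort d ! j) \<le> (\<Prod>j\<in>S. d ! j)"
proof -
  let ?A = "map (nth d) (sorted_list_of_set S)"
  have fS: "finite S" using S finite_subset by blast
  have "mset ?A = image_mset (nth d) (mset_set S)"
    by (metis mset_map mset_sorted_list_of_multiset sorted_list_of_mset_set)
  also have "\<dots> \<subseteq># image_mset (nth d) (mset_set {..<length d})"
    using S fS by (intro image_mset_subseteq_mono subset_imp_msubset_mset_set) simp_all
  also have "\<dots> = mset d"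
    by (metis mset_map map_nth mset_upt atLeast0LessThan)
  finally have sub: "mset ?A \<subseteq># mset d" .
  have "(\<Prod>j<card S. sort d ! j) \<le> (\<Prod>j<length ?A. sort ?A ! j)"
    using sort_nth_le_sort_nth_subset_mset[OF sub] by (auto intro!: prod_mono)
  also have "\<dots> = prod_list ?A"
    by (rule prod_lessThan_sort_nth)
  also have "\<dots> = (\<Prod>j\<in>S. d ! j)"
    using fS by (simp add: prod.distinct_set_conv_list[symmetric])
  finally show ?thesis .
qed

lemma prod_list_eq_prod_sort_prefix_suffix:
  fixes d :: "nat list"
  assumes "i \<le> length d"
  shows "prod_list d = (\<Prod>j<length d - i. sort d ! j) * (\<Prod>j\<in>{length d - i..<length d}. sort d ! j)"
proof -
  have "prod_list d = (\<Prod>j<length d. sort d ! j)"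
    by (simp add: prod_lessThan_sort_nth)
  also have "{..<length d} = {..<length d - i} \<union> {length d - i..<length d}" by auto
  also have "prod (\<lambda>j. sort d ! j) \<dots> = (\<Prod>j<length d - i. sort d ! j) * (\<Prod>j\<in>{length d - i..<length d}. sort d ! j)"
    by (rule prod.union_disjoint) auto
  finally show ?thesis .
qed

text \<open>The complement of S contains at least the product of the smallest entries, so S
  contains at most the product of the largest ones.\<close>

lemma prod_subset_le_prod_sort_suffix:
  fixes d :: "nat list"
  assumes S: "S \<subseteq> {..<length d}" and pos: "\<forall>x\<in>set d. 0 < x"
  shows "(\<Prod>j\<in>S. d ! j) \<le> (\<Prod>j\<in>{length d - card S..<length d}. sort d ! j)"
proof -
  let ?k = "length d" and ?C = "{..<length d} - S"
  have fS: "finite S" using S finite_subset by blast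
  have cardC: "card ?C = ?k - card S" using S fS by (simp add: card_Diff_subset)
  have low: "(\<Prod>j<?k - card S. sort d ! j) \<le> (\<Prod>j\<in>?C. d ! j)"
    using prod_sort_prefix_le_prod_subset[of ?C d] cardC by auto
  have low_pos: "0 < (\<Prod>j<?k - card S. sort d ! j)"
  proof (intro prod_pos)
    fix j assume "j \<in> {..<?k - card S}"
    then have "j < length (sort d)" by simp
    then have "sort d ! j \<in> set (sort d)" by (rule nth_mem)
    then show "0 < sort d ! j" using pos by simp
  qed
  have "(\<Prod>j\<in>S. d ! j) * (\<Prod>j\<in>?C. d ! j) = (\<Prod>j<?k. d ! j)"
    using prod.subset_diff[OF S, where g="nth d"] by (simp add: mult.commute)
  also have "\<dots> = (\<Prod>j<?k - card S. sort d ! j) * (\<Prod>j\<in>{?k - card S..<?k}. sort d ! j)"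
    using prod_list_eq_prod_sort_prefix_suffix[where i="card S" and d=d] card_mono[OF _ S]
    by (simp add: prod.list_conv_set_nth atLeast0LessThan)
  finally have eq: "(\<Prod>j\<in>S. d ! j) * (\<Prod>j\<in>?C. d ! j)
      = (\<Prod>j<?k - card S. sort d ! j) * (\<Prod>j\<in>{?k - card S..<?k}. sort d ! j)" .
  have "(\<Prod>j<?k - card S. sort d ! j) * (\<Prod>j\<in>S. d ! j)
      \<le> (\<Prod>j<?k - card S. sort d ! j) * (\<Prod>j\<in>{?k - card S..<?k}. sort d ! j)"
    unfolding eq[symmetric] using low by (simp add: mult.commute)
  then show ?thesis using low_pos by simp
qed

section \<open>Sizes of levels and balls in the periodic tree\<close>

text \<open>A vertex at depth s has level_size d s r descendants at distance r, and ball_size d s r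
  descendants at distance at most r (itself included).\<close>

definition level_size :: "nat list \<Rightarrow> nat \<Rightarrow> nat \<Rightarrow> nat" where
  "level_size d s r = (\<Prod>j<r. d ! ((s + j) mod length d))"

definition ball_size :: "nat list \<Rightarrow> nat \<Rightarrow> nat \<Rightarrow> nat" where
  "ball_size d s r = (\<Sum>t\<le>r. level_size d s t)"

lemma level_size_0 [simp]: "level_size d s 0 = 1"
  by (simp add: level_size_def)

lemma level_size_Suc: "level_size d s (Suc r) = d ! (s mod length d) * level_size d (Suc s) r"
  unfolding level_size_def by (subst prod.lessThan_Suc_shift) simp

lemma level_size_add: "level_size d s (a + b) = level_size d s a * level_size d (s + a) b"
  by (induction b) (simp_all add: level_size_def add.assoc)

lemma level_size_shift_period: "level_size d (s + length d) r = level_size d s r"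
proof -
  have "(s + length d + j) mod length d = (s + j) mod length d" for j
    by (metis add.commute add.left_commute mod_add_self2)
  then show ?thesis unfolding level_size_def by simp
qed

lemma ball_size_0 [simp]: "ball_size d s 0 = 1"
  by (simp add: ball_size_def)

lemma ball_size_Suc: "ball_size d s (Suc r) = 1 + d ! (s mod length d) * ball_size d (Suc s) r"
  unfolding ball_size_def
  by (subst sum.atMost_Suc_shift) (simp add: level_size_Suc sum_distrib_left)

lemma one_le_ball_size: "1 \<le> ball_size d s r"
  unfolding ball_size_def using member_le_sum[of 0 "{..r}" "level_size d s"] by simp

lemma ball_size_eq_sum_diff: "ball_size d s r = 1 + (\<Sum>u<r. level_size d s (r - u))"
proof -
  have "ball_size d s r = level_size d s 0 + (\<Sum>t<r. level_size d s (Suc t))"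
    unfolding ball_size_def by (rule sum.atMost_shift)
  also have "(\<Sum>t<r. level_size d s (Suc t)) = (\<Sum>u<r. level_size d s (Suc (r - Suc u)))"
    by (rule sum.nat_diff_reindex[symmetric])
  also have "\<dots> = (\<Sum>u<r. level_size d s (r - u))"
    by (rule sum.cong) (auto simp: Suc_diff_Suc)
  finally show ?thesis by simp
qed

lemma sum_lessThan_div_mod:
  fixes g :: "nat \<Rightarrow> nat \<Rightarrow> 'a::comm_monoid_add"
  assumes "i \<le> k"
  shows "(\<Sum>u<n * k + i. g (u div k) (u mod k)) = (\<Sum>m<n. \<Sum>j<k. g m j) + (\<Sum>j<i. g n j)"
proof -
  let ?h = "\<lambda>u. g (u div k) (u mod k)"
  have block: "sum ?h {m * k..<m * k + j} = (\<Sum>l<j. g m l)" if "j \<le> k" for m j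
  proof -
    have "sum ?h {m * k..<m * k + j} = (\<Sum>l<j. ?h (m * k + l))"
      using sum.atLeastLessThan_shift_bounds[of ?h 0 "m * k" j]
      by (simp add: atLeast0LessThan add.commute comp_def)
    also have "\<dots> = (\<Sum>l<j. g m l)"
      using that by (intro sum.cong) auto
    finally show ?thesis .
  qed
  have "sum ?h {..<n * k + i} = sum ?h {..<n * k} + sum ?h {n * k..<n * k + i}"
    by (simp add: atLeast0LessThan[symmetric] sum.atLeastLessThan_concat)
  also have "sum ?h {..<n * k} = (\<Sum>m<n. sum ?h {m * k..<m * k + k})"
    by (rule sum.nat_group[symmetric])
  finally show ?thesis using block assms by simp
qed

lemma inj_on_add_mod:
  assumes "i \<le> k"
  shows "inj_on (\<lambda>j. (s + j) mod k) {..<(i::nat)}"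
proof -
  have eq: "a = b" if "a \<le> b" "b < k" "(s + a) mod k = (s + b) mod k" for a b
  proof -
    have "k dvd b - a" using that mod_eq_dvd_iff_nat[of "s + a" "s + b" k] by simp
    then show ?thesis using that by (cases "a = b") (auto dest: dvd_imp_le)
  qed
  show ?thesis
  proof (rule inj_onI)
    fix x y assume "x \<in> {..<i}" "y \<in> {..<i}" "(s + x) mod k = (s + y) mod k"
    then show "x = y" using assms eq[of x y] eq[of y x] by (cases "x \<le> y") auto
  qed
qed

lemma level_size_eq_prod_image:
  assumes "i \<le> length d"
  shows "level_size d s i = (\<Prod>j\<in>(\<lambda>j. (s + j) mod length d) ` {..<i}. d ! j)"
  unfolding level_size_def using prod.reindex[OF inj_on_add_mod[OF assms, of s], of "nth d"]
  by (simp add: comp_def)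

lemma card_image_add_mod: "(i::nat) \<le> k \<Longrightarrow> card ((\<lambda>j. (s + j) mod k) ` {..<i}) = i"
  using card_image[OF inj_on_add_mod] by simp

lemma image_add_mod_subset: "0 < (k::nat) \<Longrightarrow> (\<lambda>j. (s + j) mod k) ` {..<i} \<subseteq> {..<k}"
  by auto

lemma level_size_length:
  assumes "0 < length d"
  shows "level_size d s (length d) = prod_list d"
proof -
  have "(\<lambda>j. (s + j) mod length d) ` {..<length d} = {..<length d}"
    using card_image_add_mod[of "length d" "length d" s] image_add_mod_subset[OF assms, of s "length d"]
    by (simp add: card_subset_eq)
  then show ?thesis
    by (simp add: level_size_eq_prod_image prod.list_conv_set_nth atLeast0LessThan)
qed

lemma level_size_mult_length_add:
  assumes "0 < length d"
  shows "level_size d s (n * length d + i) = prod_list d ^ n * level_size d s i"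
proof (induction n)
  case (Suc n)
  have "level_size d s (Suc n * length d + i) = level_size d s (length d + (n * length d + i))"
    by (simp add: add.assoc)
  also have "\<dots> = level_size d s (length d) * level_size d (s + length d) (n * length d + i)"
    by (rule level_size_add)
  also have "\<dots> = prod_list d * level_size d s (n * length d + i)"
    by (simp only: level_size_length[OF assms] level_size_shift_period)
  finally show ?case using Suc by simp
qed simp

lemma level_size_div_mod:
  assumes "0 < length d"
  shows "level_size d s r = prod_list d ^ (r div length d) * level_size d s (r mod length d)"
  using level_size_mult_length_add[OF assms, of s "r div length d" "r mod length d"] by simp

lemma prod_dsort_eq_prod_sort_prefix: "(\<Prod>j=1..i. real (dsort d j)) = (\<Prod>j<i. real (sort d ! j))"
  using prod.atLeast1_atMost_eq[of "\<lambda>j. real (dsort d j)" i] by (simp add: dsort_def)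

lemma prod_dsort_eq_prod_sort_suffix:
  assumes "i \<le> length d"
  shows "(\<Prod>j=length d + 1 - i..length d. real (dsort d j))
       = (\<Prod>j\<in>{length d - i..<length d}. real (sort d ! j))"
proof -
  have "{length d + 1 - i..length d} = {Suc (length d - i)..<Suc (length d)}"
    using assms by auto
  then show ?thesis
    by (simp only: prod.shift_bounds_Suc_ivl) (simp add: dsort_def)
qed

locale periodic_tree =
  fixes d :: "nat list"
  assumes length_pos: "0 < length d" and degrees_pos: "\<forall>x\<in>set d. 0 < x"
begin

lemma nth_pos: "0 < d ! (j mod length d)"
  using degrees_pos length_pos by simp

lemma sort_nth_pos: "j < length d \<Longrightarrow> 0 < sort d ! j"
  by (metis degrees_pos length_sort nth_mem set_sort)

lemma prod_list_pos: "0 < prod_list d"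
  using degrees_pos by (metis gr0I prod_list_zero_iff)

lemma level_size_pos: "0 < level_size d s r"
  unfolding level_size_def using nth_pos by (simp add: prod_pos)

lemma level_size_mono: "r \<le> r' \<Longrightarrow> level_size d s r \<le> level_size d s r'"
  using level_size_add[of d s r "r' - r"] level_size_pos[of "s + r" "r' - r"] by simp

lemma prod_sort_prefix_le_level_size:
  "i \<le> length d \<Longrightarrow> (\<Prod>j<i. sort d ! j) \<le> level_size d s i"
  using prod_sort_prefix_le_prod_subset[OF image_add_mod_subset[OF length_pos, of s i]]
  by (simp add: level_size_eq_prod_image card_image_add_mod)

lemma level_size_le_prod_sort_suffix:
  "i \<le> length d \<Longrightarrow> level_size d s i \<le> (\<Prod>j\<in>{length d - i..<length d}. sort d ! j)"
  using prod_subset_le_prod_sort_suffix[OF image_add_mod_subset[OF length_pos, of s i] degrees_pos]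
  by (simp add: level_size_eq_prod_image card_image_add_mod)

lemma of_level_size_div_mod:
  "real (level_size d s r) = real (prod_list d) ^ (r div length d) * real (level_size d s (r mod length d))"
  using level_size_div_mod[OF length_pos, of s r] by simp

lemma Gm_pos: "0 < Gm d"
  unfolding Gm_def using length_pos prod_list_pos by simp

lemma Gm_power_div_mod:
  "Gm d ^ r = real (prod_list d) ^ (r div length d) * Gm d ^ (r mod length d)"
proof -
  have "Gm d ^ r = (Gm d ^ length d) ^ (r div length d) * Gm d ^ (r mod length d)"
    by (metis mult_div_mod_eq power_add power_mult)
  then show ?thesis
    unfolding Gm_def using length_pos by simp
qed

lemma cc_mul_Gm_power:
  "cc d (r mod length d) * Gm d ^ r
     = real (prod_list d) ^ (r div length d) * (\<Prod>j<r mod length d. real (sort d ! j))"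
  using Gm_pos unfolding cc_def prod_dsort_eq_prod_sort_prefix Gm_power_div_mod[of r] by simp

lemma cbar_mul_Gm_power:
  "cbar d (r mod length d) * Gm d ^ r
     = real (prod_list d) ^ (r div length d) * (\<Prod>j\<in>{length d - r mod length d..<length d}. real (sort d ! j))"
  using Gm_pos length_pos
  unfolding cbar_def prod_dsort_eq_prod_sort_suffix[OF less_imp_le[OF mod_less_divisor[OF length_pos]]]
    Gm_power_div_mod[of r] by simp

lemma cc_mul_Gm_power_le_level_size: "cc d (r mod length d) * Gm d ^ r \<le> real (level_size d s r)"
proof -
  have le: "(\<Prod>j<r mod length d. sort d ! j) \<le> level_size d s (r mod length d)"
    using length_pos by (intro prod_sort_prefix_le_level_size) (simp add: less_imp_le)
  have "(\<Prod>j<r mod length d. real (sort d ! j)) \<le> real (level_size d s (r mod length d))"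
    using of_nat_mono[OF le, where 'a=real] by simp
  then show ?thesis
    unfolding cc_mul_Gm_power of_level_size_div_mod[of s r] by (intro mult_left_mono) simp_all
qed

lemma level_size_le_cbar_mul_Gm_power: "real (level_size d s r) \<le> cbar d (r mod length d) * Gm d ^ r"
proof -
  have le: "level_size d s (r mod length d) \<le> (\<Prod>j\<in>{length d - r mod length d..<length d}. sort d ! j)"
    using length_pos by (intro level_size_le_prod_sort_suffix) (simp add: less_imp_le)
  have "real (level_size d s (r mod length d))
      \<le> (\<Prod>j\<in>{length d - r mod length d..<length d}. real (sort d ! j))"
    using of_nat_mono[OF le, where 'a=real] by simp
  then show ?thesis
    unfolding cbar_mul_Gm_power of_level_size_div_mod[of s r] by (intro mult_left_mono) simp_all
qed

lemma xx_div_mod: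
  "xx d (u div length d) (u mod length d)
     = real (prod_list d) ^ (u div length d) * (\<Prod>j<u mod length d. real (sort d ! j))"
  unfolding xx_def prod_dsort_eq_prod_sort_prefix ..

lemma xx_div_mod_le_level_size: "xx d (u div length d) (u mod length d) \<le> real (level_size d s u)"
  using cc_mul_Gm_power_le_level_size unfolding xx_div_mod cc_mul_Gm_power by simp

lemma xx_div_mod_pos: "0 < xx d (u div length d) (u mod length d)"
  unfolding xx_div_mod using prod_list_pos sort_nth_pos length_pos
  by (intro mult_pos_pos prod_pos) (auto intro: order.strict_trans[OF _ mod_less_divisor])

lemma hh_eq_sum: "hh d (r mod length d) r = (\<Sum>u<r. 1 / xx d (u div length d) (u mod length d)) * Gm d ^ r"
proof -
  have "(r - r mod length d) div length d = r div length d"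
    by (simp add: minus_mod_eq_mult_div)
  moreover have "(\<Sum>u<r. 1 / xx d (u div length d) (u mod length d))
     = (\<Sum>m<r div length d. \<Sum>j<length d. 1 / xx d m j) + (\<Sum>j<r mod length d. 1 / xx d (r div length d) j)"
    using sum_lessThan_div_mod[of "r mod length d" "length d" "\<lambda>m j. 1 / xx d m j" "r div length d"]
      length_pos by simp
  ultimately show ?thesis unfolding hh_def Let_def by simp
qed

text \<open>Each summand of ball_size d s r - 1 = \<Sum>u<r. level_size d s (r - u) is bounded via
  level_size d s (r - u) * x \<le> level_size d s (r - u) * level_size d (s + r - u) u
  = level_size d s r \<le> cbar G^r, with x = xx d (u div k) (u mod k).\<close>

lemma ball_size_le_cbar_hh: "real (ball_size d s r) - 1 \<le> cbar d (r mod length d) * hh d (r mod length d) r"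
proof -
  let ?C = "cbar d (r mod length d) * Gm d ^ r" and ?x = "\<lambda>u. xx d (u div length d) (u mod length d)"
  have summand_le: "real (level_size d s (r - u)) \<le> ?C / ?x u" if "u < r" for u
  proof -
    have "real (level_size d s (r - u)) * ?x u
        \<le> real (level_size d s (r - u)) * real (level_size d (s + (r - u)) u)"
      by (intro mult_left_mono xx_div_mod_le_level_size) simp
    also have "\<dots> = real (level_size d s r)"
      using level_size_add[of d s "r - u" u] that by simp
    also have "\<dots> \<le> ?C" by (rule level_size_le_cbar_mul_Gm_power)
    finally show ?thesis using xx_div_mod_pos[of u] by (simp add: pos_le_divide_eq)
  qed
  have "real (ball_size d s r) - 1 = (\<Sum>u<r. real (level_size d s (r - u)))"
    by (simp add: ball_size_eq_sum_diff)
  also have "\<dots> \<le> (\<Sum>u<r. ?C / ?x u)"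
    by (rule sum_mono) (use summand_le in auto)
  also have "\<dots> = cbar d (r mod length d) * hh d (r mod length d) r"
    unfolding hh_eq_sum by (simp add: sum_distrib_left sum_distrib_right divide_inverse mult_ac)
  finally show ?thesis .
qed

definition psi_exponent :: "nat \<Rightarrow> nat" where
  "psi_exponent r = nat \<lfloor>cbar d (r mod length d) * hh d (r mod length d) r\<rfloor>"

lemma ball_size_le_psi_exponent: "ball_size d s r - 1 \<le> psi_exponent r"
proof -
  have "real (ball_size d s r - 1) \<le> cbar d (r mod length d) * hh d (r mod length d) r"
    using ball_size_le_cbar_hh[of s r] one_le_ball_size[of d s r] by (simp add: of_nat_diff)
  then show ?thesis unfolding psi_exponent_def by (simp add: le_nat_iff le_floor_iff)
qed

end

section \<open>Cones as budgeted reachability\<close>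

definition nchildren :: "nat list \<Rightarrow> nat list \<Rightarrow> nat" where
  "nchildren d w = d ! (length w mod length d)"

lemma (in periodic_tree) nchildren_pos: "0 < nchildren d w"
  unfolding nchildren_def by (rule nth_pos)

lemma nchildren_mult_level_size:
  "nchildren d w * level_size d (Suc (length w)) r = level_size d (length w) (Suc r)"
  by (simp add: level_size_Suc nchildren_def)

lemma nchildren_mult_ball_size:
  "nchildren d w * ball_size d (Suc (length w)) r = ball_size d (length w) (Suc r) - 1"
  by (simp add: ball_size_Suc nchildren_def)

lemma Nil_in_ptree [simp]: "[] \<in> ptree d"
  by (simp add: ptree_def)

lemma append_in_ptreeD:
  assumes "w @ xs \<in> ptree d" shows "w \<in> ptree d"
  unfolding ptree_def
proof (intro CollectI allI impI)
  fix i assume "i < length w"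
  then show "w ! i < d ! (i mod length d)"
    using assms unfolding ptree_def by (auto simp: nth_append dest: spec[of _ i])
qed

lemma snoc_in_ptree_iff: "w @ [j] \<in> ptree d \<longleftrightarrow> w \<in> ptree d \<and> j < nchildren d w"
  unfolding ptree_def nchildren_def by (auto simp: nth_append less_Suc_eq dest: spec)

text \<open>A path from w, entered with an inherited budget a, may step out of a vertex u when
  the larger of the current budget and the radius of u is positive; the budget of the next
  vertex is that maximum minus one. The vertices of the cone are exactly those reachable
  from the root with budget 0.\<close>

fun admissible :: "(nat list \<Rightarrow> nat) \<Rightarrow> nat list \<Rightarrow> nat \<Rightarrow> nat list \<Rightarrow> bool" where
  "admissible Rv w a [] = True"
| "admissible Rv w a (x # xs) = (1 \<le> max a (Rv w) \<and> admissible Rv (w @ [x]) (max a (Rv w) - 1) xs)"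

fun budget_after :: "(nat list \<Rightarrow> nat) \<Rightarrow> nat list \<Rightarrow> nat \<Rightarrow> nat list \<Rightarrow> nat" where
  "budget_after Rv w a [] = a"
| "budget_after Rv w a (x # xs) = budget_after Rv (w @ [x]) (max a (Rv w) - 1) xs"

definition reach_set :: "nat list \<Rightarrow> (nat list \<Rightarrow> nat) \<Rightarrow> nat list \<Rightarrow> nat \<Rightarrow> nat list set" where
  "reach_set d Rv w a = {w @ xs | xs. w @ xs \<in> ptree d \<and> admissible Rv w a xs}"

lemma admissible_append:
  "admissible Rv w a (xs @ ys) \<longleftrightarrow> admissible Rv w a xs \<and> admissible Rv (w @ xs) (budget_after Rv w a xs) ys"
  by (induction xs arbitrary: w a) auto

lemma admissible_if_length_le: "length zs \<le> max a (Rv w) \<Longrightarrow> admissible Rv w a zs"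
  by (induction zs arbitrary: w a) auto

lemma reach_set_unfold:
  assumes "w \<in> ptree d"
  shows "reach_set d Rv w a = insert w (if 1 \<le> max a (Rv w)
           then (\<Union>j<nchildren d w. reach_set d Rv (w @ [j]) (max a (Rv w) - 1)) else {})"
proof (intro set_eqI iffI)
  fix v assume "v \<in> reach_set d Rv w a"
  then obtain xs where v: "v = w @ xs" "w @ xs \<in> ptree d" "admissible Rv w a xs"
    unfolding reach_set_def by blast
  show "v \<in> insert w (if 1 \<le> max a (Rv w)
           then (\<Union>j<nchildren d w. reach_set d Rv (w @ [j]) (max a (Rv w) - 1)) else {})"
  proof (cases xs)
    case (Cons x ys)
    have "(w @ [x]) @ ys \<in> ptree d" using v Cons by simp
    moreover from append_in_ptreeD[OF this] have "x < nchildren d w"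
      by (simp add: snoc_in_ptree_iff)
    ultimately show ?thesis using v Cons unfolding reach_set_def by auto
  qed (use v in simp)
next
  fix v assume "v \<in> insert w (if 1 \<le> max a (Rv w)
           then (\<Union>j<nchildren d w. reach_set d Rv (w @ [j]) (max a (Rv w) - 1)) else {})"
  then show "v \<in> reach_set d Rv w a"
    using assms unfolding reach_set_def
    by (auto split: if_splits intro: exI[of _ "[]"] exI[of _ "_ # _"])
qed

lemma length_le_of_mem_reach_set: "v \<in> reach_set d Rv w a \<Longrightarrow> length w \<le> length v"
  unfolding reach_set_def by auto

lemma finite_reach_set_child:
  assumes "w \<in> ptree d" "finite (reach_set d Rv w a)" "1 \<le> max a (Rv w)" "j < nchildren d w"
  shows "finite (reach_set d Rv (w @ [j]) (max a (Rv w) - 1))"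
    and "card (reach_set d Rv (w @ [j]) (max a (Rv w) - 1)) < card (reach_set d Rv w a)"
proof -
  have sub: "reach_set d Rv (w @ [j]) (max a (Rv w) - 1) \<subseteq> reach_set d Rv w a - {w}"
    using reach_set_unfold[OF assms(1), of Rv a] assms(3,4)
      length_le_of_mem_reach_set[of w d Rv "w @ [j]"] by auto
  then show "finite (reach_set d Rv (w @ [j]) (max a (Rv w) - 1))"
    using assms(2) finite_subset by blast
  have "w \<in> reach_set d Rv w a" using reach_set_unfold[OF assms(1), of Rv a] by auto
  then show "card (reach_set d Rv (w @ [j]) (max a (Rv w) - 1)) < card (reach_set d Rv w a)"
    using assms(2) psubset_card_mono[of "reach_set d Rv w a"] sub by blast
qed

lemma cone_B_subset_cone_set:
  assumes "u \<in> cone_set d Rv" shows "cone_B d Rv u \<subseteq> cone_set d Rv"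
proof -
  obtain n where "u \<in> cone_I d Rv n" using assms unfolding cone_set_def by blast
  then have "cone_B d Rv u \<subseteq> cone_I d Rv (Suc n)" by auto
  then show ?thesis unfolding cone_set_def by blast
qed

lemma Nil_in_cone_set: "[] \<in> cone_set d Rv"
  unfolding cone_set_def by (auto intro: exI[of _ 0])

lemma cone_set_subset_reach_set: "cone_set d Rv \<subseteq> reach_set d Rv [] 0"
proof -
  have "cone_I d Rv n \<subseteq> reach_set d Rv [] 0" for n
  proof (induction n)
    case 0 then show ?case unfolding reach_set_def by auto
  next
    case (Suc n)
    show ?case
    proof
      fix v assume "v \<in> cone_I d Rv (Suc n)"
      then obtain u where u: "u \<in> cone_I d Rv n" "v \<in> cone_B d Rv u" by auto
      with Suc have "u \<in> ptree d" "admissible Rv [] 0 u" unfolding reach_set_def by auto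
      moreover from u(2) obtain zs where "v = u @ zs" "v \<in> ptree d" "length zs \<le> Rv u"
        unfolding cone_B_def by (auto simp: prefix_def)
      ultimately show "v \<in> reach_set d Rv [] 0"
        unfolding reach_set_def by (auto simp: admissible_append admissible_if_length_le)
    qed
  qed
  then show ?thesis unfolding cone_set_def by blast
qed

text \<open>Invariant: a path from a cone vertex u with positive budget a stays in the cone,
  because some cone vertex u' above u still has radius to cover a further steps.\<close>

lemma append_in_cone_set_if_admissible:
  assumes "u \<in> cone_set d Rv"
    and "a = 0 \<or> (\<exists>u'\<in>cone_set d Rv. prefix u' u \<and> length u - length u' + a \<le> Rv u')"
    and "u @ xs \<in> ptree d" "admissible Rv u a xs"
  shows "u @ xs \<in> cone_set d Rv"
  using assms
proof (induction xs arbitrary: u a)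
  case (Cons x xs)
  let ?m = "max a (Rv u)"
  have m1: "1 \<le> ?m" and rest: "admissible Rv (u @ [x]) (?m - 1) xs" using Cons.prems(4) by auto
  have p1: "(u @ [x]) @ xs \<in> ptree d" using Cons.prems(3) by simp
  hence ux: "u @ [x] \<in> ptree d" by (rule append_in_ptreeD)
  obtain u' where u': "u' \<in> cone_set d Rv" "prefix u' u" "length u - length u' + ?m \<le> Rv u'"
  proof (cases "a \<le> Rv u")
    case True
    then show ?thesis using that[of u] Cons.prems(1) by simp
  next
    case False
    then show ?thesis using that Cons.prems(2) by (auto simp: max_def)
  qed
  have "length u' \<le> length u" using u'(2) by (rule prefix_length_le)
  then have "u @ [x] \<in> cone_B d Rv u'"
    unfolding cone_B_def using ux u' m1 by (auto simp: prefix_def)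
  then have "u @ [x] \<in> cone_set d Rv" using cone_B_subset_cone_set[OF u'(1)] by blast
  moreover have "prefix u' (u @ [x]) \<and> length (u @ [x]) - length u' + (?m - 1) \<le> Rv u'"
    using u' m1 \<open>length u' \<le> length u\<close> by (auto simp: prefix_def)
  ultimately have "(u @ [x]) @ xs \<in> cone_set d Rv"
    using Cons.IH[of "u @ [x]" "?m - 1"] p1 rest u'(1) by blast
  then show ?case by simp
qed simp

lemma cone_set_eq_reach_set: "cone_set d Rv = reach_set d Rv [] 0"
proof
  show "reach_set d Rv [] 0 \<subseteq> cone_set d Rv"
    unfolding reach_set_def using append_in_cone_set_if_admissible[OF Nil_in_cone_set] by auto
qed (rule cone_set_subset_reach_set)

text \<open>extinct d Rv N w a: along every path of the cone grown from w with inherited budget a,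
  at most N vertices start afresh, i.e. have a radius exceeding their inherited budget.\<close>

function extinct :: "nat list \<Rightarrow> (nat list \<Rightarrow> nat) \<Rightarrow> nat \<Rightarrow> nat list \<Rightarrow> nat \<Rightarrow> bool" where
  "extinct d Rv N w a =
     (if max a (Rv w) = 0 then True
      else if Rv w \<le> a then \<forall>j<nchildren d w. extinct d Rv N (w @ [j]) (a - 1)
      else case N of 0 \<Rightarrow> False | Suc M \<Rightarrow> \<forall>j<nchildren d w. extinct d Rv M (w @ [j]) (Rv w - 1))"
  by auto
termination
  by (relation "measures [\<lambda>(_, _, N, _, _). N, \<lambda>(_, _, _, _, a). a]") auto

declare extinct.simps [simp del]

lemma extinct_Suc: "extinct d Rv N w a \<Longrightarrow> extinct d Rv (Suc N) w a"
proof (induction d Rv N w a rule: extinct.induct)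
  case (1 d Rv N w a)
  then show ?case
    by (subst extinct.simps, subst (asm) extinct.simps) (auto split: if_splits nat.splits)
qed

lemma extinct_mono: "N \<le> M \<Longrightarrow> extinct d Rv N w a \<Longrightarrow> extinct d Rv M w a"
  by (induction M rule: dec_induct) (auto intro: extinct_Suc)

lemma finite_reach_set_if_extinct:
  "w \<in> ptree d \<Longrightarrow> extinct d Rv N w a \<Longrightarrow> finite (reach_set d Rv w a)"
proof (induction d Rv N w a rule: extinct.induct)
  case (1 d Rv N w a)
  have children: "w @ [j] \<in> ptree d" if "j < nchildren d w" for j
    using "1.prems"(1) that by (simp add: snoc_in_ptree_iff)
  show ?case
    using "1.prems" "1.IH" children
    by (subst reach_set_unfold) (auto simp: extinct.simps[of d Rv N w a] max_def split: if_splits nat.splits)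
qed

lemma nat_pair_less_induct:
  assumes "\<And>N a. (\<And>N' a'. N' < N \<Longrightarrow> P N' a') \<Longrightarrow> (\<And>a'. a' < a \<Longrightarrow> P N a') \<Longrightarrow> P N a"
  shows "P (N :: nat) (a :: nat)"
proof (induction N arbitrary: a rule: less_induct)
  case (less N)
  show ?case by (induction a rule: less_induct) (rule assms; use less in blast)
qed

lemma ex_uniform_bound_if_mono:
  fixes P :: "nat \<Rightarrow> nat \<Rightarrow> bool"
  assumes "\<forall>j<n. \<exists>N. P N j" and mono: "\<And>N M j. N \<le> M \<Longrightarrow> P N j \<Longrightarrow> P M j"
  shows "\<exists>N. \<forall>j<n. P N j"
proof -
  from assms(1) obtain f where f: "\<forall>j<n. P (f j) j" by metis
  have "\<forall>j<n. P (\<Sum>i<n. f i) j"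
    using f by (auto intro: mono[OF member_le_sum] simp del: sum.lessThan_Suc)
  then show ?thesis by blast
qed

lemma extinct_if_finite_reach_set:
  "w \<in> ptree d \<Longrightarrow> finite (reach_set d Rv w a) \<Longrightarrow> \<exists>N. extinct d Rv N w a"
proof (induction "card (reach_set d Rv w a)" arbitrary: w a rule: less_induct)
  case less
  let ?m = "max a (Rv w)"
  show ?case
  proof (cases "?m = 0")
    case True
    then have "extinct d Rv 0 w a" by (subst extinct.simps) simp
    then show ?thesis by blast
  next
    case False
    then have m1: "1 \<le> ?m" by (simp add: max_def)
    have "\<forall>j<nchildren d w. \<exists>N. extinct d Rv N (w @ [j]) (?m - 1)"
      using less.hyps finite_reach_set_child[OF less.prems m1] less.prems(1)
      by (simp add: snoc_in_ptree_iff)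
    then obtain N where N: "\<forall>j<nchildren d w. extinct d Rv N (w @ [j]) (?m - 1)"
      using ex_uniform_bound_if_mono[of "nchildren d w" "\<lambda>N j. extinct d Rv N (w @ [j]) (?m - 1)"]
        extinct_mono by blast
    then have "\<forall>j<nchildren d w. extinct d Rv (Suc N) (w @ [j]) (?m - 1)"
      by (blast intro: extinct_Suc)
    then have "extinct d Rv (Suc N) w a"
      using N False by (subst extinct.simps) (auto simp: max_def)
    then show ?thesis by blast
  qed
qed

lemma finite_cone_set_iff_extinct: "finite (cone_set d Rv) \<longleftrightarrow> (\<exists>N. extinct d Rv N [] 0)"
  unfolding cone_set_eq_reach_set
  using extinct_if_finite_reach_set finite_reach_set_if_extinct Nil_in_ptree by blast

section \<open>Generating functions of a transformed radius\<close>

lemma expectation_sums: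
  fixes P :: "nat pmf" and g :: "nat \<Rightarrow> real"
  assumes "\<And>r. \<bar>g r\<bar> \<le> B"
  shows "(\<lambda>r. pmf P r * g r) sums measure_pmf.expectation P g"
proof -
  have "integrable (measure_pmf P) g"
    by (rule measure_pmf.integrable_const_bound[where B=B]) (use assms in auto)
  then have "integrable (count_space UNIV) (\<lambda>r. pmf P r *\<^sub>R g r)"
    by (simp add: measure_pmf_eq_density integrable_density)
  moreover have "measure_pmf.expectation P g = integral\<^sup>L (count_space UNIV) (\<lambda>r. pmf P r *\<^sub>R g r)"
    by (simp add: measure_pmf_eq_density integral_density)
  ultimately show ?thesis using sums_integral_count_space_nat[of "\<lambda>r. pmf P r *\<^sub>R g r"] by simp
qed

lemma pmf_sums_one: "(\<lambda>r. pmf P r) sums (1::real)"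
  using expectation_sums[of "\<lambda>_. 1" 1 P] by simp

lemma sum_expectation_indI:
  fixes P :: "nat pmf" and F :: "nat \<Rightarrow> nat \<Rightarrow> real"
  assumes "0 < length d" and bounded: "\<And>i r. \<bar>F i r\<bar> \<le> B"
  shows "(\<Sum>i<length d. measure_pmf.expectation P (\<lambda>r. F i r * indI d i r))
       = measure_pmf.expectation P (\<lambda>r. F (r mod length d) r)"
proof -
  have "0 \<le> B" using bounded[of 0 0] by (meson abs_ge_zero order.trans)
  then have "integrable (measure_pmf P) (\<lambda>r. F i r * indI d i r)" for i
    by (intro measure_pmf.integrable_const_bound[where B=B]) (use bounded in \<open>auto simp: indI_def\<close>)
  then have "(\<Sum>i<length d. measure_pmf.expectation P (\<lambda>r. F i r * indI d i r))
      = measure_pmf.expectation P (\<lambda>r. \<Sum>i<length d. F i r * indI d i r)"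
    by (simp add: Bochner_Integration.integral_sum)
  also have "(\<lambda>r. \<Sum>i<length d. F i r * indI d i r) = (\<lambda>r. F (r mod length d) r)"
    using assms(1) by (auto simp: indI_def if_distrib cong: if_cong)
  finally show ?thesis .
qed

definition gen_fun :: "nat pmf \<Rightarrow> (nat \<Rightarrow> nat) \<Rightarrow> real \<Rightarrow> real" where
  "gen_fun P e x = measure_pmf.expectation P (\<lambda>r. x ^ e r)"

context
  fixes P :: "nat pmf" and e :: "nat \<Rightarrow> nat"
begin

lemma gen_fun_sums: "0 \<le> x \<Longrightarrow> x \<le> 1 \<Longrightarrow> (\<lambda>r. pmf P r * x ^ e r) sums gen_fun P e x"
  unfolding gen_fun_def by (rule expectation_sums[where B=1]) (simp add: power_le_one)

lemma gen_fun_mono: "0 \<le> x \<Longrightarrow> x \<le> y \<Longrightarrow> y \<le> 1 \<Longrightarrow> gen_fun P e x \<le> gen_fun P e y"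
  by (rule sums_le[OF _ gen_fun_sums gen_fun_sums]) (simp_all add: mult_left_mono power_mono)

lemma gen_fun_unit_interval: "0 \<le> x \<Longrightarrow> x \<le> 1 \<Longrightarrow> 0 \<le> gen_fun P e x \<and> gen_fun P e x \<le> 1"
  using gen_fun_mono[of x 1] by (simp add: gen_fun_def integral_nonneg_AE)

lemma gen_fun_iterates_unit_interval: "0 \<le> (gen_fun P e ^^ n) 0 \<and> (gen_fun P e ^^ n) 0 \<le> 1"
  by (induction n) (simp_all add: gen_fun_unit_interval)

lemma gen_fun_tendsto:
  assumes "\<And>n. 0 \<le> t n \<and> t n \<le> 1" and "t \<longlonglongrightarrow> L"
  shows "(\<lambda>n. gen_fun P e (t n)) \<longlonglongrightarrow> gen_fun P e L"
  unfolding gen_fun_def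
proof (rule integral_dominated_convergence[where w="\<lambda>_. 1"])
  show "AE r in measure_pmf P. (\<lambda>n. t n ^ e r) \<longlonglongrightarrow> L ^ e r"
    using assms(2) by (auto intro: tendsto_power)
  show "AE r in measure_pmf P. norm (t n ^ e r) \<le> 1" for n
    using assms(1)[of n] by (auto simp: power_le_one)
qed simp_all

lemma gen_fun_iterates_tendsto_fixpoint:
  obtains L where "(\<lambda>n. (gen_fun P e ^^ n) 0) \<longlonglongrightarrow> L" "0 \<le> L" "L \<le> 1" "gen_fun P e L = L"
proof -
  let ?f = "gen_fun P e" let ?t = "\<lambda>n. (?f ^^ n) 0"
  have "?t n \<le> ?t (Suc n)" for n
  proof (induction n)
    case (Suc n)
    have "?f (?t n) \<le> ?f (?t (Suc n))"
      using Suc gen_fun_iterates_unit_interval[of n] gen_fun_iterates_unit_interval[of "Suc n"]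
      by (intro gen_fun_mono) simp_all
    then show ?case by simp
  qed (simp add: gen_fun_unit_interval)
  then have "incseq ?t" by (rule incseq_SucI)
  then obtain L where lim: "?t \<longlonglongrightarrow> L"
    using incseq_convergent[of ?t 1] gen_fun_iterates_unit_interval by blast
  have L: "0 \<le> L" "L \<le> 1"
    using gen_fun_iterates_unit_interval
    by (auto intro: LIMSEQ_le_const[OF lim] LIMSEQ_le_const2[OF lim])
  have "(\<lambda>n. ?f (?t n)) \<longlonglongrightarrow> ?f L"
    using gen_fun_iterates_unit_interval lim by (rule gen_fun_tendsto)
  moreover have "(\<lambda>n. ?f (?t n)) \<longlonglongrightarrow> L"
    using LIMSEQ_Suc[OF lim] by simp
  ultimately have "?f L = L" by (rule LIMSEQ_unique)
  with lim L that show ?thesis by blast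
qed

end

section \<open>Independence along the tree\<close>

locale cone_percolation = prob_space M + periodic_tree d
  for M :: "'a measure" and d :: "nat list" +
  fixes R :: "nat list \<Rightarrow> 'a \<Rightarrow> nat" and P :: "nat pmf"
  assumes indep_radii: "indep_vars (\<lambda>_. count_space UNIV) R (ptree d)"
    and distr_radius: "\<forall>v\<in>ptree d. distr M (count_space UNIV) (R v) = measure_pmf P"
begin

definition subtree :: "nat list \<Rightarrow> nat list set" where
  "subtree w = {u \<in> ptree d. prefix w u}"

definition radius_sets :: "nat list \<Rightarrow> 'a set set" where
  "radius_sets u = {R u -` A \<inter> space M | A. True}"

definition radii_sigma :: "nat list set \<Rightarrow> 'a set set" where
  "radii_sigma U = sigma_sets (space M) (\<Union>u\<in>U. radius_sets u)"

lemma subtree_subset_ptree: "subtree w \<subseteq> ptree d"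
  unfolding subtree_def by auto

lemma mem_subtree_self: "w \<in> ptree d \<Longrightarrow> w \<in> subtree w"
  unfolding subtree_def by auto

lemma subtree_child_subset: "subtree (w @ [j]) \<subseteq> subtree w - {w}"
  unfolding subtree_def prefix_def by auto

lemma disjoint_subtree_children: "i \<noteq> j \<Longrightarrow> subtree (w @ [i]) \<inter> subtree (w @ [j]) = {}"
  unfolding subtree_def by (auto simp: prefix_def)

lemma radius_sets_subset_Pow: "radius_sets u \<subseteq> Pow (space M)"
  unfolding radius_sets_def by auto

lemma sigma_algebra_radii_sigma: "sigma_algebra (space M) (radii_sigma U)"
  unfolding radii_sigma_def
  by (rule sigma_algebra_sigma_sets) (use radius_sets_subset_Pow in blast)

lemma measurable_radius: "v \<in> ptree d \<Longrightarrow> R v \<in> measurable M (count_space UNIV)"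
  using indep_radii unfolding indep_vars_def2 by auto

lemma radius_sets_subset_events: "v \<in> ptree d \<Longrightarrow> radius_sets v \<subseteq> events"
  unfolding radius_sets_def using measurable_radius by (auto intro: measurable_sets)

lemma radii_sigma_subset_events: "U \<subseteq> ptree d \<Longrightarrow> radii_sigma U \<subseteq> events"
  unfolding radii_sigma_def
  by (rule sets.sigma_sets_subset) (use radius_sets_subset_events in blast)

lemma radii_sigma_mono: "U \<subseteq> V \<Longrightarrow> radii_sigma U \<subseteq> radii_sigma V"
  unfolding radii_sigma_def by (rule sigma_sets_mono') blast

lemma radius_eq_in_radii_sigma: "w \<in> U \<Longrightarrow> {\<omega> \<in> space M. R w \<omega> = r} \<in> radii_sigma U"
proof -
  assume "w \<in> U"
  have "{\<omega> \<in> space M. R w \<omega> = r} = R w -` {r} \<inter> space M" by auto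
  also have "\<dots> \<in> radius_sets w" unfolding radius_sets_def by blast
  finally show ?thesis
    using \<open>w \<in> U\<close> unfolding radii_sigma_def by (auto intro: sigma_sets.Basic)
qed

lemma case_radius_in_radii_sigma:
  assumes "w \<in> U" "\<And>r. B r \<in> radii_sigma U"
  shows "{\<omega> \<in> space M. \<omega> \<in> B (R w \<omega>)} \<in> radii_sigma U"
proof -
  interpret sigma_algebra "space M" "radii_sigma U" by (rule sigma_algebra_radii_sigma)
  have "{\<omega> \<in> space M. \<omega> \<in> B (R w \<omega>)} = (\<Union>r. {\<omega> \<in> space M. R w \<omega> = r} \<inter> B r)" by auto
  also have "\<dots> \<in> radii_sigma U" using radius_eq_in_radii_sigma[OF assms(1)] assms(2) by auto
  finally show ?thesis .
qed

lemma indep_sets_radius_sets: "indep_sets radius_sets (ptree d)"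
  using indep_radii unfolding indep_vars_def2 radius_sets_def by simp

lemma Int_stable_radius_sets: "Int_stable (radius_sets u)"
  unfolding Int_stable_def radius_sets_def
proof (intro ballI)
  fix X Y assume "X \<in> {R u -` A \<inter> space M |A. True}" "Y \<in> {R u -` A \<inter> space M |A. True}"
  then obtain A B where "X = R u -` A \<inter> space M" "Y = R u -` B \<inter> space M" by blast
  then have "X \<inter> Y = R u -` (A \<inter> B) \<inter> space M" by auto
  then show "X \<inter> Y \<in> {R u -` A \<inter> space M |A. True}" by blast
qed

lemma indep_sets_radii_sigma:
  assumes "disjoint_family_on U I" "\<Union> (U ` I) \<subseteq> ptree d"
  shows "indep_sets (\<lambda>i. radii_sigma (U i)) I"
  unfolding radii_sigma_def
  using indep_sets_mono_index[OF assms(2) indep_sets_radius_sets] Int_stable_radius_sets assms(1)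
  by (rule indep_sets_collect_sigma)

lemma prob_radius_eq: "w \<in> ptree d \<Longrightarrow> prob {\<omega> \<in> space M. R w \<omega> = r} = pmf P r"
proof -
  assume w: "w \<in> ptree d"
  have "prob {\<omega> \<in> space M. R w \<omega> = r} = measure (distr M (count_space UNIV) (R w)) {r}"
    using measurable_radius[OF w] by (subst measure_distr) (auto intro: arg_cong[where f=prob])
  also have "\<dots> = pmf P r" using distr_radius w by (simp add: measure_pmf_single)
  finally show ?thesis .
qed

text \<open>Conditioning on the radius at w: the rest of the subtree of w is independent of it.\<close>

lemma case_radius_sums:
  assumes w: "w \<in> ptree d" and B: "\<And>r. B r \<in> radii_sigma (subtree w - {w})"
  shows "(\<lambda>r. pmf P r * prob (B r)) sums prob {\<omega> \<in> space M. \<omega> \<in> B (R w \<omega>)}"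
proof -
  let ?C = "\<lambda>r. {\<omega> \<in> space M. R w \<omega> = r} \<inter> B r"
  have indep: "indep_sets (\<lambda>b. radii_sigma (if b then {w} else subtree w - {w})) UNIV"
    using w subtree_subset_ptree by (intro indep_sets_radii_sigma) (auto simp: disjoint_family_on_def)
  have prob_C: "prob (?C r) = pmf P r * prob (B r)" for r
  proof -
    let ?A = "\<lambda>b. if b then {\<omega> \<in> space M. R w \<omega> = r} else B r"
    have "prob (\<Inter>b\<in>UNIV. ?A b) = (\<Prod>b\<in>UNIV. prob (?A b))"
      by (rule indep_setsD[OF indep]) (use radius_eq_in_radii_sigma[of w "{w}"] B in auto)
    then show ?thesis using prob_radius_eq[OF w] by (simp add: UNIV_bool Int_commute)
  qed
  have "?C r \<in> events" for r
  proof -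
    interpret sigma_algebra "space M" "radii_sigma (subtree w)" by (rule sigma_algebra_radii_sigma)
    have "?C r \<in> radii_sigma (subtree w)"
      using radius_eq_in_radii_sigma[OF mem_subtree_self[OF w]]
        radii_sigma_mono[of "subtree w - {w}" "subtree w"] B by blast
    then show ?thesis using radii_sigma_subset_events[OF subtree_subset_ptree] by blast
  qed
  then have "(\<lambda>r. prob (?C r)) sums prob (\<Union>r. ?C r)"
    by (intro finite_measure_UNION) (auto simp: disjoint_family_on_def)
  moreover have "(\<Union>r. ?C r) = {\<omega> \<in> space M. \<omega> \<in> B (R w \<omega>)}" by auto
  ultimately show ?thesis by (simp add: prob_C)
qed

definition children_event :: "nat list \<Rightarrow> (nat list \<Rightarrow> 'a set) \<Rightarrow> 'a set" where
  "children_event w E = {\<omega> \<in> space M. \<forall>j<nchildren d w. \<omega> \<in> E (w @ [j])}"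

lemma children_event_in_radii_sigma:
  assumes "\<forall>j<nchildren d w. E (w @ [j]) \<in> radii_sigma (subtree (w @ [j]))"
  shows "children_event w E \<in> radii_sigma (subtree w - {w})"
proof -
  interpret S: sigma_algebra "space M" "radii_sigma (subtree w - {w})"
    by (rule sigma_algebra_radii_sigma)
  have "E (w @ [j]) \<in> radii_sigma (subtree w - {w})" if "j < nchildren d w" for j
    using assms that radii_sigma_mono[OF subtree_child_subset] by blast
  then have "{\<omega> \<in> space M. \<omega> \<in> E (w @ [j])} \<in> radii_sigma (subtree w - {w})"
    if "j \<in> {..<nchildren d w}" for j
    using that S.sets_into_space by (simp add: Int_absorb1 Collect_mem_eq Int_def[symmetric])
  then have "{\<omega> \<in> space M. \<forall>j\<in>{..<nchildren d w}. \<omega> \<in> E (w @ [j])} \<in> radii_sigma (subtree w - {w})"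
    by (intro S.sets_Collect_finite_All) auto
  moreover have "{\<omega> \<in> space M. \<forall>j\<in>{..<nchildren d w}. \<omega> \<in> E (w @ [j])} = children_event w E"
    unfolding children_event_def by auto
  ultimately show ?thesis by simp
qed

lemma prob_children_event:
  assumes E: "\<forall>j<nchildren d w. E (w @ [j]) \<in> radii_sigma (subtree (w @ [j]))"
  shows "prob (children_event w E) = (\<Prod>j<nchildren d w. prob (E (w @ [j])))"
proof -
  have "E (w @ [j]) \<subseteq> space M" if "j < nchildren d w" for j
    using E that radii_sigma_subset_events[OF subtree_subset_ptree, of "w @ [j]"]
    by (blast dest: sets.sets_into_space)
  then have "children_event w E = (\<Inter>j<nchildren d w. E (w @ [j]))"
    using nchildren_pos[of w] unfolding children_event_def by auto
  moreover have "indep_sets (\<lambda>j. radii_sigma (subtree (w @ [j]))) {..<nchildren d w}"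
    using disjoint_subtree_children subtree_subset_ptree
    by (intro indep_sets_radii_sigma) (auto simp: disjoint_family_on_def subset_iff)
  then have "prob (\<Inter>j<nchildren d w. E (w @ [j])) = (\<Prod>j<nchildren d w. prob (E (w @ [j])))"
    by (rule indep_setsD) (use nchildren_pos[of w] E in auto)
  ultimately show ?thesis by simp
qed

lemma prob_children_event_le:
  assumes "\<forall>j<nchildren d w. E (w @ [j]) \<in> radii_sigma (subtree (w @ [j])) \<and> prob (E (w @ [j])) \<le> x ^ K"
  shows "prob (children_event w E) \<le> x ^ (nchildren d w * K)"
proof -
  have "prob (children_event w E) = (\<Prod>j<nchildren d w. prob (E (w @ [j])))"
    using assms by (simp add: prob_children_event)
  also have "\<dots> \<le> (\<Prod>j<nchildren d w. x ^ K)" by (rule prod_mono) (use assms in auto)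
  finally show ?thesis by (simp add: power_mult mult.commute)
qed

lemma prob_children_event_ge:
  assumes "0 \<le> x"
    and "\<forall>j<nchildren d w. E (w @ [j]) \<in> radii_sigma (subtree (w @ [j])) \<and> x ^ K \<le> prob (E (w @ [j]))"
  shows "x ^ (nchildren d w * K) \<le> prob (children_event w E)"
proof -
  have "x ^ (nchildren d w * K) = (\<Prod>j<nchildren d w. x ^ K)" by (simp add: power_mult mult.commute)
  also have "\<dots> \<le> (\<Prod>j<nchildren d w. prob (E (w @ [j])))" by (rule prod_mono) (use assms in auto)
  also have "\<dots> = prob (children_event w E)" using assms(2) by (simp add: prob_children_event)
  finally show ?thesis .
qed

end

section \<open>Extinction probabilities\<close>

context cone_percolation
begin

definition extinct_event :: "nat \<Rightarrow> nat list \<Rightarrow> nat \<Rightarrow> 'a set" where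
  "extinct_event N w a = {\<omega> \<in> space M. extinct d (\<lambda>v. R v \<omega>) N w a}"

definition extinct_given_radius :: "nat \<Rightarrow> nat list \<Rightarrow> nat \<Rightarrow> nat \<Rightarrow> 'a set" where
  "extinct_given_radius N w a r =
     (if max a r = 0 then space M
      else if r \<le> a then children_event w (\<lambda>c. extinct_event N c (a - 1))
      else case N of 0 \<Rightarrow> {} | Suc N' \<Rightarrow> children_event w (\<lambda>c. extinct_event N' c (r - 1)))"

lemma extinct_event_eq: "extinct_event N w a = {\<omega> \<in> space M. \<omega> \<in> extinct_given_radius N w a (R w \<omega>)}"
  unfolding extinct_event_def extinct_given_radius_def children_event_def
  by (subst extinct.simps) (auto split: nat.splits)

lemma extinct_given_radius_in_radii_sigma:
  assumes "\<And>N' a' j. N' < N \<or> N' = N \<and> a' < a \<Longrightarrow> j < nchildren d w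
      \<Longrightarrow> extinct_event N' (w @ [j]) a' \<in> radii_sigma (subtree (w @ [j]))"
  shows "extinct_given_radius N w a r \<in> radii_sigma (subtree w - {w})"
proof -
  interpret S: sigma_algebra "space M" "radii_sigma (subtree w - {w})"
    by (rule sigma_algebra_radii_sigma)
  show ?thesis
    unfolding extinct_given_radius_def using assms
    by (auto split: nat.splits intro!: children_event_in_radii_sigma)
qed

lemma extinct_event_in_radii_sigma: "w \<in> ptree d \<Longrightarrow> extinct_event N w a \<in> radii_sigma (subtree w)"
proof (induction N a arbitrary: w rule: nat_pair_less_induct)
  case (1 N a w)
  have "extinct_given_radius N w a r \<in> radii_sigma (subtree w)" for r
    using "1.IH" "1.prems" radii_sigma_mono[of "subtree w - {w}" "subtree w"]
    by (blast intro: extinct_given_radius_in_radii_sigma snoc_in_ptree_iff[THEN iffD2])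
  then show ?case
    unfolding extinct_event_eq by (intro case_radius_in_radii_sigma mem_subtree_self "1.prems")
qed

lemma prob_extinct_event_sums:
  "w \<in> ptree d \<Longrightarrow> (\<lambda>r. pmf P r * prob (extinct_given_radius N w a r)) sums prob (extinct_event N w a)"
  unfolding extinct_event_eq
  by (intro case_radius_sums extinct_given_radius_in_radii_sigma extinct_event_in_radii_sigma)
    (simp_all add: snoc_in_ptree_iff)

lemma children_extinct_events:
  assumes "w \<in> ptree d"
    and "\<And>w'. w' \<in> ptree d \<Longrightarrow> length w' = Suc (length w) \<Longrightarrow> Q (extinct_event N w' a)"
  shows "\<forall>j<nchildren d w. extinct_event N (w @ [j]) a \<in> radii_sigma (subtree (w @ [j]))
           \<and> Q (extinct_event N (w @ [j]) a)"
  using assms by (auto simp: snoc_in_ptree_iff intro: extinct_event_in_radii_sigma)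

lemma power_level_size_le_powr:
  assumes "0 < \<rho>" "\<rho> \<le> 1"
  shows "\<rho> ^ level_size d s r \<le> \<rho> powr (cc d (r mod length d) * Gm d ^ r)"
proof -
  have "\<rho> ^ level_size d s r = \<rho> powr real (level_size d s r)"
    using assms(1) by (simp add: powr_realpow)
  also have "\<dots> \<le> \<rho> powr (cc d (r mod length d) * Gm d ^ r)"
    using assms by (intro powr_mono' cc_mul_Gm_power_le_level_size) simp_all
  finally show ?thesis .
qed

lemma prob_extinct_given_radius_le:
  assumes "0 \<le> \<rho>" "max a r \<noteq> 0"
    and children: "\<And>N' b. N' < N \<or> N' = N \<and> b < a \<Longrightarrow>
      \<forall>j<nchildren d w. extinct_event N' (w @ [j]) b \<in> radii_sigma (subtree (w @ [j]))
        \<and> prob (extinct_event N' (w @ [j]) b) \<le> \<rho> ^ level_size d (Suc (length w)) b"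
  shows "prob (extinct_given_radius N w a r) \<le> \<rho> ^ level_size d (length w) (max a r)"
proof (cases "r \<le> a")
  case True
  then show ?thesis
    using assms(2) prob_children_event_le[OF children[of N "a - 1"]]
    by (simp add: extinct_given_radius_def nchildren_mult_level_size max_def)
next
  case False
  then show ?thesis
    using assms(1) prob_children_event_le[OF children[of "N - 1" "r - 1"]]
    by (cases N) (simp_all add: extinct_given_radius_def nchildren_mult_level_size max_def)
qed

text \<open>Upper bound: every vertex at distance a below w must independently see an extinct
  process, and each does so with probability at most \<rho>.\<close>

lemma prob_extinct_event_le:
  assumes rho: "0 < \<rho>" "\<rho> \<le> 1"
    and rho_sums: "(\<lambda>r. pmf P r * (if r = 0 then 1 else \<rho> powr (cc d (r mod length d) * Gm d ^ r))) sums \<rho>"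
  shows "w \<in> ptree d \<Longrightarrow> prob (extinct_event N w a) \<le> \<rho> ^ level_size d (length w) a"
proof (induction N a arbitrary: w rule: nat_pair_less_induct)
  case (1 N a w)
  let ?K = "level_size d (length w)"
  have given: "prob (extinct_given_radius N w a r) \<le> \<rho> ^ ?K (max a r)" if "max a r \<noteq> 0" for r
  proof (rule prob_extinct_given_radius_le[OF less_imp_le[OF rho(1)] that])
    fix N' b assume lt: "N' < N \<or> N' = N \<and> b < a"
    have IH: "prob (extinct_event N' w' b) \<le> \<rho> ^ level_size d (length w') b" if "w' \<in> ptree d" for w'
      using lt "1.IH"(1)[OF _ that] "1.IH"(2)[OF _ that] by auto
    show "\<forall>j<nchildren d w. extinct_event N' (w @ [j]) b \<in> radii_sigma (subtree (w @ [j]))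
        \<and> prob (extinct_event N' (w @ [j]) b) \<le> \<rho> ^ level_size d (Suc (length w)) b"
      by (intro children_extinct_events[OF "1.prems"]) (metis IH)
  qed
  note sums = prob_extinct_event_sums[OF "1.prems"]
  show ?case
  proof (cases "a = 0")
    case True
    have "pmf P r * prob (extinct_given_radius N w a r)
        \<le> pmf P r * (if r = 0 then 1 else \<rho> powr (cc d (r mod length d) * Gm d ^ r))" for r
      using True given[of r] power_level_size_le_powr[OF rho, of "length w" r]
      by (intro mult_left_mono) auto
    then show ?thesis using sums_le[OF _ sums rho_sums] True by simp
  next
    case False
    have "\<rho> ^ ?K (max a r) \<le> \<rho> ^ ?K a" for r
      using rho by (intro power_decreasing level_size_mono) simp_all
    then have "pmf P r * prob (extinct_given_radius N w a r) \<le> pmf P r * \<rho> ^ ?K a" for r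
      using False given[of r] by (intro mult_left_mono) (auto intro: order.trans)
    then show ?thesis
      using sums_le[OF _ sums sums_mult2[OF pmf_sums_one[of P], of "\<rho> ^ ?K a"]] by simp
  qed
qed

definition psi_iterate :: "nat \<Rightarrow> real" where
  "psi_iterate N = (gen_fun P psi_exponent ^^ N) 0"

lemma psi_iterate_unit_interval: "0 \<le> psi_iterate N" "psi_iterate N \<le> 1"
  unfolding psi_iterate_def using gen_fun_iterates_unit_interval by blast+

lemma prob_extinct_given_radius_ge:
  assumes "N = Suc N'"
    and children: "\<And>N'' b. N'' < N \<or> N'' = N \<and> b < a \<Longrightarrow>
      \<forall>j<nchildren d w. extinct_event N'' (w @ [j]) b \<in> radii_sigma (subtree (w @ [j]))
        \<and> psi_iterate N'' ^ ball_size d (Suc (length w)) b \<le> prob (extinct_event N'' (w @ [j]) b)"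
  shows "psi_iterate N ^ (ball_size d (length w) a - 1) * psi_iterate N' ^ psi_exponent r
    \<le> prob (extinct_given_radius N w a r)"
    (is "?t ^ ?e * ?s ^ psi_exponent r \<le> _")
proof -
  note unit = psi_iterate_unit_interval
  consider "max a r = 0" | "max a r \<noteq> 0" "r \<le> a" | "\<not> r \<le> a" by linarith
  then show ?thesis
  proof cases
    case 1
    then show ?thesis
      using unit by (simp add: extinct_given_radius_def mult_le_one power_le_one prob_space)
  next
    case 2
    then have "?t ^ ?e \<le> prob (extinct_given_radius N w a r)"
      using prob_children_event_ge[OF unit(1) children[of N "a - 1"]]
      by (simp add: extinct_given_radius_def nchildren_mult_ball_size)
    moreover have "?t ^ ?e * ?s ^ psi_exponent r \<le> ?t ^ ?e"
      using unit by (intro mult_right_le_one_le) (simp_all add: power_le_one)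
    ultimately show ?thesis by linarith
  next
    case 3
    have "?s ^ psi_exponent r \<le> ?s ^ (ball_size d (length w) r - 1)"
      using unit by (intro power_decreasing ball_size_le_psi_exponent)
    also have "\<dots> \<le> prob (extinct_given_radius N w a r)"
      using 3 assms(1) prob_children_event_ge[OF unit(1) children[of N' "r - 1"]]
      by (simp add: extinct_given_radius_def nchildren_mult_ball_size)
    moreover have "?t ^ ?e * ?s ^ psi_exponent r \<le> ?s ^ psi_exponent r"
      using unit by (intro mult_left_le_one_le) (simp_all add: power_le_one)
    ultimately show ?thesis by linarith
  qed
qed

text \<open>Lower bound: a vertex starting afresh with radius r has at most psi_exponent r further
  vertices within distance r, and each of them must die out with one fresh start fewer.\<close>

lemma prob_extinct_event_ge:
  "w \<in> ptree d \<Longrightarrow> psi_iterate N ^ ball_size d (length w) a \<le> prob (extinct_event N w a)"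
proof (induction N a arbitrary: w rule: nat_pair_less_induct)
  case (1 N a w)
  let ?B = "ball_size d (length w) a"
  show ?case
  proof (cases N)
    case 0
    then show ?thesis
      using one_le_ball_size[of d "length w" a] by (simp add: psi_iterate_def power_0_left)
  next
    case (Suc N')
    let ?t = "psi_iterate N" and ?s = "psi_iterate N'"
    have given: "?t ^ (?B - 1) * ?s ^ psi_exponent r \<le> prob (extinct_given_radius N w a r)" for r
    proof (rule prob_extinct_given_radius_ge[OF Suc])
      fix N'' b assume lt: "N'' < N \<or> N'' = N \<and> b < a"
      have IH: "psi_iterate N'' ^ ball_size d (length w') b \<le> prob (extinct_event N'' w' b)"
        if "w' \<in> ptree d" for w'
        using lt "1.IH"(1)[OF _ that] "1.IH"(2)[OF _ that] by auto
      show "\<forall>j<nchildren d w. extinct_event N'' (w @ [j]) b \<in> radii_sigma (subtree (w @ [j]))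
          \<and> psi_iterate N'' ^ ball_size d (Suc (length w)) b \<le> prob (extinct_event N'' (w @ [j]) b)"
        by (intro children_extinct_events[OF "1.prems"]) (metis IH)
    qed
    have lower_sums: "(\<lambda>r. ?t ^ (?B - 1) * (pmf P r * ?s ^ psi_exponent r)) sums (?t ^ (?B - 1) * ?t)"
      using Suc sums_mult[OF gen_fun_sums[OF psi_iterate_unit_interval]]
      by (simp add: psi_iterate_def)
    have summand_le: "?t ^ (?B - 1) * (pmf P r * ?s ^ psi_exponent r)
        \<le> pmf P r * prob (extinct_given_radius N w a r)" for r
      using mult_left_mono[OF given pmf_nonneg] by (simp add: mult.left_commute)
    have "?t ^ (?B - 1) * ?t \<le> prob (extinct_event N w a)"
      using sums_le[OF summand_le lower_sums prob_extinct_event_sums[OF "1.prems"]] .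
    then show ?thesis
      using power_minus_mult[of ?B ?t] one_le_ball_size[of d "length w" a] by simp
  qed
qed

definition finite_cone_event :: "'a set" where
  "finite_cone_event = {\<omega> \<in> space M. finite (cone_set d (\<lambda>v. R v \<omega>))}"

lemma finite_cone_event_eq: "finite_cone_event = (\<Union>N. extinct_event N [] 0)"
  unfolding finite_cone_event_def extinct_event_def using finite_cone_set_iff_extinct by blast

lemma extinct_event_in_events: "w \<in> ptree d \<Longrightarrow> extinct_event N w a \<in> events"
  using extinct_event_in_radii_sigma radii_sigma_subset_events[OF subtree_subset_ptree] by blast

lemma finite_cone_event_in_events: "finite_cone_event \<in> events"
  unfolding finite_cone_event_eq using extinct_event_in_events[OF Nil_in_ptree] by blast

lemma prob_extinct_event_tendsto: "(\<lambda>N. prob (extinct_event N [] 0)) \<longlonglongrightarrow> prob finite_cone_event"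
  unfolding finite_cone_event_eq
proof (rule finite_Lim_measure_incseq)
  show "range (\<lambda>N. extinct_event N [] 0) \<subseteq> events"
    using extinct_event_in_events[OF Nil_in_ptree] by blast
  show "incseq (\<lambda>N. extinct_event N [] 0)"
    by (rule incseq_SucI) (auto simp: extinct_event_def intro: extinct_Suc)
qed

lemma prob_finite_cone_event_le:
  assumes "0 < \<rho>" "\<rho> \<le> 1"
    and "(\<lambda>r. pmf P r * (if r = 0 then 1 else \<rho> powr (cc d (r mod length d) * Gm d ^ r))) sums \<rho>"
  shows "prob finite_cone_event \<le> \<rho>"
  using prob_extinct_event_le[OF assms Nil_in_ptree, of _ 0]
  by (intro LIMSEQ_le_const2[OF prob_extinct_event_tendsto]) auto

lemma prob_finite_cone_event_ge:
  assumes "psi_iterate \<longlonglongrightarrow> L"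
  shows "L \<le> prob finite_cone_event"
  using prob_extinct_event_ge[OF Nil_in_ptree, of _ 0]
  by (intro LIMSEQ_le[OF assms prob_extinct_event_tendsto]) auto

end

context periodic_tree
begin

lemma cc_nonneg: "0 \<le> cc d i"
  unfolding cc_def using Gm_pos by (intro divide_nonneg_nonneg prod_nonneg) auto

lemma rho_fixed_point:
  fixes P :: "nat pmf"
  assumes "0 \<le> \<rho>" and "0 < pmf P 0"
    and eq: "(\<Sum>i<length d. measure_pmf.expectation P
            (\<lambda>r. \<rho> powr (cc d i * Gm d ^ r) * indI d i r)) + (1 - \<rho>) * pmf P 0 = \<rho>"
    and least: "\<forall>x\<ge>0. (\<Sum>i<length d. measure_pmf.expectation P
            (\<lambda>r. x powr (cc d i * Gm d ^ r) * indI d i r)) + (1 - x) * pmf P 0 = x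
            \<longrightarrow> \<rho> \<le> x"
  shows "0 < \<rho>" and "\<rho> \<le> 1"
    and "(\<lambda>r. pmf P r * (if r = 0 then 1 else \<rho> powr (cc d (r mod length d) * Gm d ^ r))) sums \<rho>"
proof -
  let ?E = "measure_pmf.expectation P"
  have collapse: "(\<Sum>i<length d. ?E (\<lambda>r. x powr (cc d i * Gm d ^ r) * indI d i r))
      = ?E (\<lambda>r. x powr (cc d (r mod length d) * Gm d ^ r))" if "0 \<le> x" "x \<le> 1" for x
    using that cc_nonneg Gm_pos
    by (intro sum_expectation_indI[OF length_pos, where B=1]) (simp add: powr_le1)
  show "\<rho> \<le> 1" using least collapse[of 1] by simp
  let ?\<phi> = "\<lambda>r. \<rho> powr (cc d (r mod length d) * Gm d ^ r)"
  have eq': "?E ?\<phi> + (1 - \<rho>) * pmf P 0 = \<rho>"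
    using eq collapse[OF assms(1) \<open>\<rho> \<le> 1\<close>] by simp
  show "0 < \<rho>"
  proof (rule ccontr)
    assume "\<not> 0 < \<rho>"
    then have "\<rho> = 0" using assms(1) by simp
    then show False using eq' assms(2) by simp
  qed
  have "(\<lambda>r. pmf P r * ?\<phi> r + (if r = 0 then pmf P r * (1 - \<rho>) else 0)) sums (?E ?\<phi> + pmf P 0 * (1 - \<rho>))"
    using \<open>0 < \<rho>\<close> \<open>\<rho> \<le> 1\<close> cc_nonneg Gm_pos
    by (intro sums_add expectation_sums[where B=1] sums_single) (simp add: powr_le1)
  moreover have "pmf P r * ?\<phi> r + (if r = 0 then pmf P r * (1 - \<rho>) else 0)
      = pmf P r * (if r = 0 then 1 else ?\<phi> r)" for r
    using \<open>0 < \<rho>\<close> by (cases "r = 0") (simp_all add: cc_def algebra_simps)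
  ultimately show "(\<lambda>r. pmf P r * (if r = 0 then 1 else ?\<phi> r)) sums \<rho>"
    using eq' by (simp add: mult.commute)
qed

lemma psi_le_fixed_point:
  fixes P :: "nat pmf"
  assumes least: "\<forall>x\<ge>0. (\<Sum>i<length d. measure_pmf.expectation P
            (\<lambda>r. x ^ nat \<lfloor>cbar d i * hh d i r\<rfloor> * indI d i r)) = x \<longrightarrow> \<psi> \<le> x"
    and "0 \<le> L" "L \<le> 1" "gen_fun P psi_exponent L = L"
  shows "\<psi> \<le> L"
proof -
  have "(\<Sum>i<length d. measure_pmf.expectation P (\<lambda>r. L ^ nat \<lfloor>cbar d i * hh d i r\<rfloor> * indI d i r))
      = gen_fun P psi_exponent L"
    unfolding gen_fun_def psi_exponent_def using assms(2,3)
    by (intro sum_expectation_indI[OF length_pos, where B=1]) (simp add: power_le_one)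
  then show ?thesis using least assms(2,4) by simp
qed

end

theorem theorem3:
  fixes M :: "'a measure" and R :: "nat list \<Rightarrow> 'a \<Rightarrow> nat"
    and P :: "nat pmf" and d :: "nat list" and \<rho> \<psi> :: real
  assumes "prob_space M"
    and "length d \<ge> 1" and "\<forall>x\<in>set d. x \<ge> 2"
    and "0 < pmf P 0" and "pmf P 0 < 1"
    and "prob_space.indep_vars M (\<lambda>_. count_space UNIV) R (ptree d)"
    and "\<forall>v\<in>ptree d. distr M (count_space UNIV) (R v) = measure_pmf P"
    and "\<rho> \<ge> 0"
    and "(\<Sum>i<length d. measure_pmf.expectation P
            (\<lambda>r. \<rho> powr (cc d i * Gm d ^ r) * indI d i r)) + (1 - \<rho>) * pmf P 0 = \<rho>"
    and "\<forall>x\<ge>0. (\<Sum>i<length d. measure_pmf.expectation P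
            (\<lambda>r. x powr (cc d i * Gm d ^ r) * indI d i r)) + (1 - x) * pmf P 0 = x
            \<longrightarrow> \<rho> \<le> x"
    and "\<psi> \<ge> 0"
    and "(\<Sum>i<length d. measure_pmf.expectation P
            (\<lambda>r. \<psi> ^ nat \<lfloor>cbar d i * hh d i r\<rfloor> * indI d i r)) = \<psi>"
    and "\<forall>x\<ge>0. (\<Sum>i<length d. measure_pmf.expectation P
            (\<lambda>r. x ^ nat \<lfloor>cbar d i * hh d i r\<rfloor> * indI d i r)) = x
            \<longrightarrow> \<psi> \<le> x"
  shows "1 - \<rho> \<le> measure M {\<omega>\<in>space M. infinite (cone_set d (\<lambda>v. R v \<omega>))}
       \<and> measure M {\<omega>\<in>space M. infinite (cone_set d (\<lambda>v. R v \<omega>))} \<le> 1 - \<psi>"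
proof -
  have "periodic_tree d"
    using assms(2,3) by unfold_locales fastforce+
  then interpret cone_percolation M d R P
    using assms(1,6,7) by (intro cone_percolation.intro cone_percolation_axioms.intro)
  note rho = rho_fixed_point[OF assms(8,4,9,10)]
  obtain L where L: "psi_iterate \<longlonglongrightarrow> L" "0 \<le> L" "L \<le> 1" "gen_fun P psi_exponent L = L"
    using gen_fun_iterates_tendsto_fixpoint[of P psi_exponent] unfolding psi_iterate_def[abs_def] .
  have "\<psi> \<le> L" using psi_le_fixed_point[OF assms(13) L(2-4)] .
  moreover have "{\<omega>\<in>space M. infinite (cone_set d (\<lambda>v. R v \<omega>))} = space M - finite_cone_event"
    unfolding finite_cone_event_def by auto
  ultimately show ?thesis
    using prob_compl[OF finite_cone_event_in_events] prob_finite_cone_event_le[OF rho]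
      prob_finite_cone_event_ge[OF L(1)]
    by simp
qed

end
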